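(* Let $(\Omega,\sqsubseteq)$ be a poset and $\mathcal{R}:\Omega\to\wp(\Omega)$ satisfy: ($\mathcal{R}$-monotonicity) if $\omega'\sqsubseteq\omega$ then $\mathcal{R}(\omega')\subseteq\mathcal{R}(\omega)$; ($\mathcal{R}$-regularity) $\mathcal{R}(\omega)\in\mathcal{RO}(\Omega,\sqsubseteq)$ for all $\omega$; ($\mathcal{R}$-refinability) if $\nu\in\mathcal{R}(\omega)$ then there is $\omega'\sqsubseteq\omega$ such that for all $\omega''\sqsubseteq\omega'$ there is $\nu'\sqsubseteq\nu$ with $\nu'\in\mathcal{R}(\omega'')$. Then for any $E\in\mathcal{RO}(\Omega,\sqsubseteq)$, we have $\{\omega\in\Omega\mid\mathcal{R}(\omega)\subseteq E\}\in\mathcal{RO}(\Omega,\sqsubseteq)$.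
   Context: $\downarrow E=\{\omega\mid\omega\sqsubseteq\nu\text{ for some }\nu\in E\}$; $\rho(E)=\{\omega\mid\forall\omega'\sqsubseteq\omega\ \exists\omega''\sqsubseteq\omega'\colon\omega''\in\downarrow E\}$; $\mathcal{RO}(\Omega,\sqsubseteq)=\{E\subseteq\Omega\mid\rho(E)=E\}$ is the set of regular open sets of the downset topology of $(\Omega,\sqsubseteq)$. *)

theory Defs
  imports Main
begin

definition downclosure :: "'a::order set \<Rightarrow> 'a set" where
  "downclosure E = {w. \<exists>v\<in>E. w \<le> v}"

definition rho :: "'a::order set \<Rightarrow> 'a set" where
  "rho E = {w. \<forall>w'. w' \<le> w \<longrightarrow> (\<exists>w''. w'' \<le> w' \<and> w'' \<in> downclosure E)}"

definition RO :: "'a::order set set" where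
  "RO = {E. rho E = E}"

end

theory Submission
  imports Defs
begin

text \<open>Regular open sets of the downset topology are exactly the down-sets S containing every
  point below which S is dense. The set F = {w. R w \<subseteq> E} is a down-set by monotonicity of R.
  If F is dense below w and v \<in> R w, then for every v' \<le> v refinability yields w' \<le> w such that
  every w'' \<le> w' sees some element below v' in R w''; choosing w'' \<le> w' in F puts that element
  in E. So E is dense below v, hence v \<in> E by regularity of E, and w \<in> F.\<close>

lemma subset_rho: "S \<subseteq> rho S"
  unfolding rho_def downclosure_def by blast

lemma RO_iff_rho_subset: "S \<in> RO \<longleftrightarrow> rho S \<subseteq> S"
  using subset_rho[of S] unfolding RO_def by blast

lemma mem_rho_down_closed:
  assumes "\<And>x y. x \<in> S \<Longrightarrow> y \<le> x \<Longrightarrow> y \<in> S"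
  shows "x \<in> rho S \<longleftrightarrow> (\<forall>x'\<le>x. \<exists>x''\<le>x'. x'' \<in> S)"
  using assms unfolding rho_def downclosure_def by blast

lemma RO_down_closed:
  assumes "S \<in> RO" "x \<in> S" "y \<le> x"
  shows "y \<in> S"
proof -
  have "x \<in> rho S" using assms(1,2) by (simp add: RO_def)
  then have "y \<in> rho S" unfolding rho_def using assms(3) order_trans by blast
  then show ?thesis using assms(1) by (simp add: RO_def)
qed

lemma mem_RO_iff:
  assumes "S \<in> RO"
  shows "x \<in> S \<longleftrightarrow> (\<forall>x'\<le>x. \<exists>x''\<le>x'. x'' \<in> S)"
proof -
  have "x \<in> S \<longleftrightarrow> x \<in> rho S" using assms by (simp add: RO_def)
  also have "\<dots> \<longleftrightarrow> (\<forall>x'\<le>x. \<exists>x''\<le>x'. x'' \<in> S)"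
    using mem_rho_down_closed RO_down_closed[OF assms] by blast
  finally show ?thesis .
qed

theorem lemma3p10:
  fixes R :: "'a::order \<Rightarrow> 'a set" and E :: "'a set"
  assumes R_mono: "\<And>w w'. w' \<le> w \<Longrightarrow> R w' \<subseteq> R w"
    and R_reg: "\<And>w. R w \<in> RO"
    and R_ref: "\<And>w v. v \<in> R w \<Longrightarrow>
        \<exists>w'. w' \<le> w \<and> (\<forall>w''. w'' \<le> w' \<longrightarrow> (\<exists>v'. v' \<le> v \<and> v' \<in> R w''))"
    and E_RO: "E \<in> RO"
  shows "{w. R w \<subseteq> E} \<in> RO"
  unfolding RO_iff_rho_subset
proof
  fix w assume "w \<in> rho {w. R w \<subseteq> E}"
  moreover have "w \<in> rho {w. R w \<subseteq> E} \<longleftrightarrow> (\<forall>w1\<le>w. \<exists>w2\<le>w1. w2 \<in> {w. R w \<subseteq> E})"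
    by (rule mem_rho_down_closed) (use R_mono in blast)
  ultimately have dense: "\<forall>w1\<le>w. \<exists>w2\<le>w1. R w2 \<subseteq> E"
    by simp
  have "R w \<subseteq> E"
  proof
    fix v assume "v \<in> R w"
    show "v \<in> E"
    proof (rule mem_RO_iff[OF E_RO, THEN iffD2], intro allI impI)
      fix v' assume "v' \<le> v"
      then have "v' \<in> R w" using RO_down_closed[OF R_reg \<open>v \<in> R w\<close>] by blast
      then obtain w1 where "w1 \<le> w" and refined: "\<forall>w''\<le>w1. \<exists>v''\<le>v'. v'' \<in> R w''"
        using R_ref by blast
      then obtain w2 where "w2 \<le> w1" "R w2 \<subseteq> E" using dense by blast
      then show "\<exists>v''\<le>v'. v'' \<in> E" using refined by blast
    qed
  qed
  then show "w \<in> {w. R w \<subseteq> E}" by simp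
qed

end
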